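(* Assume $q\neq0$. For all integers $n$ and $k$, $$h_{n+k+1}^2-q^{2k+1}h_{n-k}^2=d^2u_{2k+1}\left[\left(b^2-a^2q\right)u_{2n+1}-aq\left(2b-ap\right)u_{2n}\right].$$
   Context: Let $p,q,a,b$ be complex numbers with $q\neq0$, and let $d^2=p^2-4q$. The sequence $(u_n)$ is defined by $u_0=0$, $u_1=1$, $u_n=pu_{n-1}-qu_{n-2}$. The Horadam-Lucas sequence $(h_n)$ is defined by $h_0=2b-ap$, $h_1=bp-2aq$, $h_n=ph_{n-1}-qh_{n-2}$. Both are extended to all integer indices by $x_{n-2}=(px_{n-1}-x_n)/q$. *)

theory Defs
  imports Complex_Main
begin

fun rec_fwd :: "complex \<Rightarrow> complex \<Rightarrow> complex \<Rightarrow> complex \<Rightarrow> nat \<Rightarrow> complex" where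
  "rec_fwd p q x0 x1 0 = x0"
| "rec_fwd p q x0 x1 (Suc 0) = x1"
| "rec_fwd p q x0 x1 (Suc (Suc n)) = p * rec_fwd p q x0 x1 (Suc n) - q * rec_fwd p q x0 x1 n"

text \<open>rec_bwd m is the term of index -m.\<close>
fun rec_bwd :: "complex \<Rightarrow> complex \<Rightarrow> complex \<Rightarrow> complex \<Rightarrow> nat \<Rightarrow> complex" where
  "rec_bwd p q x0 x1 0 = x0"
| "rec_bwd p q x0 x1 (Suc 0) = (p * x0 - x1) / q"
| "rec_bwd p q x0 x1 (Suc (Suc m)) = (p * rec_bwd p q x0 x1 (Suc m) - rec_bwd p q x0 x1 m) / q"

definition rec_seq :: "complex \<Rightarrow> complex \<Rightarrow> complex \<Rightarrow> complex \<Rightarrow> int \<Rightarrow> complex" where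
  "rec_seq p q x0 x1 n = (if 0 \<le> n then rec_fwd p q x0 x1 (nat n) else rec_bwd p q x0 x1 (nat (- n)))"

definition useq :: "complex \<Rightarrow> complex \<Rightarrow> int \<Rightarrow> complex" where
  "useq p q = rec_seq p q 0 1"

definition hseq :: "complex \<Rightarrow> complex \<Rightarrow> complex \<Rightarrow> complex \<Rightarrow> int \<Rightarrow> complex" where
  "hseq p q a b = rec_seq p q (2 * b - a * p) (b * p - 2 * a * q)"

end

theory Submission
  imports Defs
begin

text \<open>Write \<open>x\<^sup>2 - p x + q = (x - \<alpha>)(x - \<beta>)\<close>, so \<open>d = \<alpha> - \<beta>\<close> up to sign, and \<open>\<alpha>\<beta> = q \<noteq> 0\<close>.
  Every solution of the recurrence on \<open>\<int>\<close> is determined by its values at 0 and 1, which gives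
  the Binet forms \<open>d u\<^sub>m = \<alpha>\<^sup>m - \<beta>\<^sup>m\<close> and \<open>h\<^sub>m = (b - a\<beta>)\<alpha>\<^sup>m + (b - a\<alpha>)\<beta>\<^sup>m\<close>. Substituting them, the
  identity becomes a rational-function identity in \<open>\<alpha>, \<beta>, \<alpha>\<^sup>n, \<beta>\<^sup>n, \<alpha>\<^sup>k, \<beta>\<^sup>k\<close>. Since the right-hand
  side carries the factor \<open>d\<^sup>2\<close>, only \<open>d u\<^sub>m\<close> is needed, so the case \<open>d = 0\<close> needs no separate treatment.\<close>

definition lucas_recurrence :: "'a::comm_ring \<Rightarrow> 'a \<Rightarrow> (int \<Rightarrow> 'a) \<Rightarrow> bool" where
  "lucas_recurrence p q f \<longleftrightarrow> (\<forall>n. f (n + 2) = p * f (n + 1) - q * f n)"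

lemma rec_seq_neg: "rec_seq p q x0 x1 (- int m) = rec_bwd p q x0 x1 m"
  by (cases "m = 0") (simp_all add: rec_seq_def)

lemma lucas_recurrence_rec_seq:
  assumes "q \<noteq> 0"
  shows "lucas_recurrence p q (rec_seq p q x0 x1)"
  unfolding lucas_recurrence_def
proof
  fix n :: int
  have "n \<ge> 0 \<or> n = -1 \<or> n = - int (nat (- n - 2)) - 2"
    by linarith
  then consider "n \<ge> 0" | "n = -1" | m where "n = - int m - 2"
    by blast
  then show "rec_seq p q x0 x1 (n + 2) = p * rec_seq p q x0 x1 (n + 1) - q * rec_seq p q x0 x1 n"
  proof cases
    case 1
    then obtain m where "n = int m" by (metis nonneg_eq_int)
    moreover have "nat (int m + 2) = Suc (Suc m)" "nat (int m + 1) = Suc m" by auto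
    ultimately show ?thesis by (simp add: rec_seq_def)
  next
    case 2
    with assms show ?thesis by (simp add: rec_seq_def)
  next
    case (3 m)
    have shifts: "n = - int (Suc (Suc m))" "n + 1 = - int (Suc m)" "n + 2 = - int m"
      using 3 by simp_all
    show ?thesis
      unfolding shifts(2,3) unfolding shifts(1) rec_seq_neg
      using assms by (simp add: field_simps)
  qed
qed

lemma lucas_recurrence_unique:
  fixes f g :: "int \<Rightarrow> 'a::idom"
  assumes "q \<noteq> 0" and f: "lucas_recurrence p q f" and g: "lucas_recurrence p q g"
    and "f 0 = g 0" "f 1 = g 1"
  shows "f n = g n"
proof -
  have "f n = g n \<and> f (n + 1) = g (n + 1)"
  proof (induction n rule: int_induct[where k = 0])
    case base
    with assms show ?case by simp
  next
    case (step1 i)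
    then have "f (i + 2) = g (i + 2)"
      using f g unfolding lucas_recurrence_def by metis
    with step1 show ?case by (simp add: add.assoc)
  next
    case (step2 i)
    have shift: "i - 1 + 2 = i + 1" "i - 1 + 1 = i"
      by simp_all
    have "q * f (i - 1) = p * f i - f (i + 1)" "q * g (i - 1) = p * g i - g (i + 1)"
      using f g unfolding lucas_recurrence_def by (metis shift eq_diff_eq add_diff_cancel_left')+
    with step2 have "q * f (i - 1) = q * g (i - 1)"
      by simp
    with \<open>q \<noteq> 0\<close> step2 show ?case by simp
  qed
  then show ?thesis ..
qed

lemma lucas_recurrence_lincomb:
  assumes "lucas_recurrence p q f" "lucas_recurrence p q g"
  shows "lucas_recurrence p q (\<lambda>n. c * f n + e * g n)"
  unfolding lucas_recurrence_def
proof
  fix n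
  from assms have "f (n + 2) = p * f (n + 1) - q * f n" "g (n + 2) = p * g (n + 1) - q * g n"
    unfolding lucas_recurrence_def by blast+
  then show "c * f (n + 2) + e * g (n + 2) = p * (c * f (n + 1) + e * g (n + 1)) - q * (c * f n + e * g n)"
    by (simp only:) (simp add: algebra_simps)
qed

lemma lucas_recurrence_cmult:
  assumes "lucas_recurrence p q f"
  shows "lucas_recurrence p q (\<lambda>n. c * f n)"
  using lucas_recurrence_lincomb[OF assms assms, of c 0] by simp

lemma lucas_recurrence_powi:
  fixes \<alpha> :: "'a::field"
  assumes "\<alpha> \<noteq> 0" "\<alpha>\<^sup>2 = p * \<alpha> - q"
  shows "lucas_recurrence p q (\<lambda>n. \<alpha> powi n)"
  unfolding lucas_recurrence_def
proof
  fix n :: int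
  have "\<alpha> powi (n + 2) = \<alpha> powi n * \<alpha>\<^sup>2" "\<alpha> powi (n + 1) = \<alpha> powi n * \<alpha>"
    using assms(1) by (simp_all add: power_int_add)
  then show "\<alpha> powi (n + 2) = p * \<alpha> powi (n + 1) - q * \<alpha> powi n"
    using assms(2) by (simp add: algebra_simps)
qed

context
  fixes p q \<alpha> \<beta> :: complex
  assumes p: "p = \<alpha> + \<beta>" and q: "q = \<alpha> * \<beta>" and "q \<noteq> 0"
begin

private lemma roots_nonzero: "\<alpha> \<noteq> 0" "\<beta> \<noteq> 0"
  using \<open>q \<noteq> 0\<close> q by auto

private lemma binet_solution:
  "lucas_recurrence p q (\<lambda>n. c * \<alpha> powi n + e * \<beta> powi n)"
  using roots_nonzero
  by (intro lucas_recurrence_lincomb lucas_recurrence_powi)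
     (simp_all add: p q power2_eq_square algebra_simps)

lemma hseq_binet:
  "hseq p q a b n = (b - a * \<beta>) * \<alpha> powi n + (b - a * \<alpha>) * \<beta> powi n"
  unfolding hseq_def
  by (rule lucas_recurrence_unique[OF \<open>q \<noteq> 0\<close> lucas_recurrence_rec_seq[OF \<open>q \<noteq> 0\<close>] binet_solution])
     (auto simp: rec_seq_def p q algebra_simps)

lemma useq_binet: "(\<alpha> - \<beta>) * useq p q n = \<alpha> powi n - \<beta> powi n"
proof -
  have "lucas_recurrence p q (\<lambda>n. (\<alpha> - \<beta>) * useq p q n)"
    unfolding useq_def by (intro lucas_recurrence_cmult lucas_recurrence_rec_seq \<open>q \<noteq> 0\<close>)
  from lucas_recurrence_unique[OF \<open>q \<noteq> 0\<close> this binet_solution[of 1 "-1"]]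
  show ?thesis by (simp add: useq_def rec_seq_def)
qed

end

lemma binet_identity:
  fixes \<alpha> \<beta> a b :: "'a::field" and n k :: int
  assumes "\<alpha> \<noteq> 0" "\<beta> \<noteq> 0"
  defines "H \<equiv> \<lambda>m. (b - a * \<beta>) * \<alpha> powi m + (b - a * \<alpha>) * \<beta> powi m"
    and "V \<equiv> \<lambda>m. \<alpha> powi m - \<beta> powi m"
  shows "(H (n + k + 1))\<^sup>2 - (\<alpha> * \<beta>) powi (2 * k + 1) * (H (n - k))\<^sup>2
       = V (2 * k + 1) * ((b\<^sup>2 - a\<^sup>2 * (\<alpha> * \<beta>)) * V (2 * n + 1)
           - a * (\<alpha> * \<beta>) * (2 * b - a * (\<alpha> + \<beta>)) * V (2 * n))"
proof -
  define X Y S T where "X = \<alpha> powi n" "Y = \<beta> powi n" "S = \<alpha> powi k" "T = \<beta> powi k"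
  have "S \<noteq> 0" "T \<noteq> 0"
    using assms(1,2) by (simp_all add: X_Y_S_T_def)
  have powers: "\<alpha> powi (n + k + 1) = X * S * \<alpha>" "\<beta> powi (n + k + 1) = Y * T * \<beta>"
    "\<alpha> powi (n - k) = X / S" "\<beta> powi (n - k) = Y / T"
    "\<alpha> powi (2 * k + 1) = S\<^sup>2 * \<alpha>" "\<beta> powi (2 * k + 1) = T\<^sup>2 * \<beta>"
    "\<alpha> powi (2 * n + 1) = X\<^sup>2 * \<alpha>" "\<beta> powi (2 * n + 1) = Y\<^sup>2 * \<beta>"
    "\<alpha> powi (2 * n) = X\<^sup>2" "\<beta> powi (2 * n) = Y\<^sup>2"
    "(\<alpha> * \<beta>) powi (2 * k + 1) = S\<^sup>2 * T\<^sup>2 * \<alpha> * \<beta>"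
    using assms(1,2) by (auto simp: X_Y_S_T_def power_int_add power_int_diff power_int_mult
        power_int_mult_distrib mult.commute)
  show ?thesis
    using \<open>S \<noteq> 0\<close> \<open>T \<noteq> 0\<close> unfolding H_def V_def powers by (simp add: field_simps power2_eq_square)
qed

theorem mainTheorem15:
  fixes p q a b d :: complex and n k :: int
  assumes "q \<noteq> 0"
    and "d\<^sup>2 = p\<^sup>2 - 4 * q"
  shows "(hseq p q a b (n + k + 1))\<^sup>2 - q powi (2 * k + 1) * (hseq p q a b (n - k))\<^sup>2
       = d\<^sup>2 * useq p q (2 * k + 1) *
         ((b\<^sup>2 - a\<^sup>2 * q) * useq p q (2 * n + 1) - a * q * (2 * b - a * p) * useq p q (2 * n))"
proof -
  define \<alpha> \<beta> where "\<alpha> = (p + d) / 2" "\<beta> = (p - d) / 2"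
  have p: "p = \<alpha> + \<beta>" and q: "q = \<alpha> * \<beta>" and d: "d = \<alpha> - \<beta>"
    using assms(2) by (auto simp: \<alpha>_\<beta>_def field_simps power2_eq_square)
  have "\<alpha> \<noteq> 0" "\<beta> \<noteq> 0"
    using \<open>q \<noteq> 0\<close> q by auto
  have "d\<^sup>2 * useq p q (2 * k + 1) *
          ((b\<^sup>2 - a\<^sup>2 * q) * useq p q (2 * n + 1) - a * q * (2 * b - a * p) * useq p q (2 * n))
      = (d * useq p q (2 * k + 1)) *
          ((b\<^sup>2 - a\<^sup>2 * q) * (d * useq p q (2 * n + 1)) - a * q * (2 * b - a * p) * (d * useq p q (2 * n)))"
    by (simp add: power2_eq_square algebra_simps)
  then show ?thesis
    unfolding hseq_binet[OF p q \<open>q \<noteq> 0\<close>] d useq_binet[OF p q \<open>q \<noteq> 0\<close>]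
    unfolding p q using binet_identity[OF \<open>\<alpha> \<noteq> 0\<close> \<open>\<beta> \<noteq> 0\<close>, of b a n k] by simp
qed

end
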